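(* Let $G = (\mathbb{Z}/2\mathbb{Z})^n$, $N = 2^n$, $A \subseteq G$, and $\epsilon \in (0,\tfrac12)$. Suppose that $H \leq G$ is a subgroup which is not $\epsilon$-regular for $A$. Then there is a subgroup $H' \leq H$ such that $|G/H'| \leq 2^{|G/H|}$ and $\mathrm{ind}(A;H') \geq \mathrm{ind}(A;H) + \epsilon^3$.
   Context: For a subgroup $H \leq G$ and $g \in G$, let $A_H^{+g} = \{x \in H : x + g \in A\}$. Define $\mathrm{ind}(A;H) = \frac{1}{N}\sum_{g \in G}\left(|A_H^{+g}|/|H|\right)^2$. An element $g \in G$ is an $\epsilon$-regular value (with respect to $A$ and $H$) if for every nontrivial character $\chi$ of $H$, $\left|\sum_{x \in H} A_H^{+g}(x)\chi(x)\right| \leq \epsilon|H|$, where $A_H^{+g}$ also denotes its indicator function. $H$ is $\epsilon$-regular for $A$ if the number of $g \in G$ which are not $\epsilon$-regular values is at most $\epsilon N$. *)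

theory Defs
  imports "HOL-Analysis.Analysis" "HOL-Library.Z2"
begin

instance bit :: finite
proof
  have "(UNIV :: bit set) = {0, 1}" using bit_not_zero_iff by auto
  then show "finite (UNIV :: bit set)" by (metis finite.emptyI finite_insert)
qed

text \<open>G = (Z/2Z)^n is modelled as the type bit ^ 'n for a finite index type 'n
  (n = CARD('n)); N = card G = 2^n.\<close>

definition is_subgroup :: "('a::ab_group_add) set \<Rightarrow> bool" where
  "is_subgroup H \<longleftrightarrow> 0 \<in> H \<and> (\<forall>x\<in>H. \<forall>y\<in>H. x + y \<in> H) \<and> (\<forall>x\<in>H. - x \<in> H)"

definition quotient_set :: "('a::ab_group_add) set \<Rightarrow> 'a set set" where
  "quotient_set H = {(\<lambda>h. g + h) ` H | g. g \<in> UNIV}"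

definition shifted :: "('a::ab_group_add) set \<Rightarrow> 'a set \<Rightarrow> 'a \<Rightarrow> 'a set" where
  "shifted A H g = {x \<in> H. x + g \<in> A}"

definition ind :: "('a::{ab_group_add,finite}) set \<Rightarrow> 'a set \<Rightarrow> real" where
  "ind A H = (1 / real (card (UNIV :: 'a set))) *
     (\<Sum>g\<in>UNIV. (real (card (shifted A H g)) / real (card H)) ^ 2)"

definition is_character :: "('a::ab_group_add) set \<Rightarrow> ('a \<Rightarrow> complex) \<Rightarrow> bool" where
  "is_character H chi \<longleftrightarrow> (\<forall>x\<in>H. chi x \<noteq> 0) \<and> (\<forall>x\<in>H. \<forall>y\<in>H. chi (x + y) = chi x * chi y)"

definition nontrivial_character :: "('a::ab_group_add) set \<Rightarrow> ('a \<Rightarrow> complex) \<Rightarrow> bool" where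
  "nontrivial_character H chi \<longleftrightarrow> is_character H chi \<and> (\<exists>x\<in>H. chi x \<noteq> 1)"

definition regular_value :: "real \<Rightarrow> ('a::ab_group_add) set \<Rightarrow> 'a set \<Rightarrow> 'a \<Rightarrow> bool" where
  "regular_value \<epsilon> A H g \<longleftrightarrow>
     (\<forall>chi. nontrivial_character H chi \<longrightarrow>
        cmod (\<Sum>x\<in>H. (if x \<in> shifted A H g then 1 else 0) * chi x) \<le> \<epsilon> * real (card H))"

definition eps_regular :: "real \<Rightarrow> ('a::{ab_group_add,finite}) set \<Rightarrow> 'a set \<Rightarrow> bool" where
  "eps_regular \<epsilon> A H \<longleftrightarrow>
     real (card {g. \<not> regular_value \<epsilon> A H g}) \<le> \<epsilon> * real (card (UNIV :: 'a set))"

end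

theory Submission
  imports Defs
begin

(* Since G has exponent 2, every character of H takes values +-1, and translating g by an
   element of H only multiplies the character sums of A_H^{+g} by such a sign.  Hence the
   non-regular values form a union of cosets of H, more than eps |G/H| of them.  Choose
   ceil(eps |G/H|) of these cosets, each with a character witnessing non-regularity, and let
   H' be the intersection of the kernels.  Each kernel has index at most 2, so
   |G/H'| <= |G/H| 2^ceil(eps |G/H|) <= 2^|G/H| because |G/H| is a power of 2.
   Refining H never decreases the mean square density (Cauchy-Schwarz), and on a chosen coset
   the kernel K of its character splits H into two cosets whose densities differ by more than
   2 eps; this adds eps^2 to the mean square density there.  The chosen cosets cover an
   eps-fraction of G, so ind increases by at least eps^3. *)

lemma is_subgroup_zero: "is_subgroup H \<Longrightarrow> 0 \<in> H"
  by (simp add: is_subgroup_def)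

lemma is_subgroup_add: "is_subgroup H \<Longrightarrow> x \<in> H \<Longrightarrow> y \<in> H \<Longrightarrow> x + y \<in> H"
  by (simp add: is_subgroup_def)

lemma is_subgroup_diff: "is_subgroup H \<Longrightarrow> x \<in> H \<Longrightarrow> y \<in> H \<Longrightarrow> x - y \<in> H"
  unfolding is_subgroup_def diff_conv_add_uminus by blast

lemma is_subgroup_UNIV: "is_subgroup UNIV"
  by (simp add: is_subgroup_def)

lemma card_subgroup_pos: "is_subgroup (H :: 'a::{ab_group_add,finite} set) \<Longrightarrow> 0 < card H"
  unfolding card_gt_0_iff using is_subgroup_zero by auto

lemma bij_betw_translate_subgroup:
  assumes "is_subgroup H" "t \<in> H"
  shows "bij_betw (\<lambda>h. h + t) H H"
  by (rule bij_betw_byWitness[where f' = "\<lambda>h. h - t"])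
     (use assms is_subgroup_add is_subgroup_diff in auto)

lemma sum_translate_subgroup:
  assumes "is_subgroup H" "t \<in> H"
  shows "(\<Sum>h\<in>H. f (h + t)) = (\<Sum>h\<in>H. f h)"
  using sum.reindex_bij_betw[OF bij_betw_translate_subgroup[OF assms]] .

lemma sum_UNIV_average_subgroup:
  fixes H :: "'a::{ab_group_add,finite} set" and f :: "'a \<Rightarrow> real"
  assumes "is_subgroup H"
  shows "(\<Sum>g\<in>UNIV. f g) = (\<Sum>g\<in>UNIV. \<Sum>h\<in>H. f (g + h)) / card H"
proof -
  have "(\<Sum>g\<in>UNIV. \<Sum>h\<in>H. f (g + h)) = (\<Sum>h\<in>H. \<Sum>g\<in>UNIV. f (g + h))"
    by (rule sum.swap)
  also have "\<dots> = (\<Sum>h\<in>H. \<Sum>g\<in>UNIV. f g)"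
    by (rule sum.cong[OF refl]) (rule sum_translate_subgroup[OF is_subgroup_UNIV UNIV_I])
  also have "\<dots> = card H * (\<Sum>g\<in>UNIV. f g)"
    by simp
  finally show ?thesis
    using card_subgroup_pos[OF assms] by (simp add: card_gt_0_iff)
qed

lemma of_nat_card_shifted_eq_sum:
  fixes H :: "'a::{ab_group_add,finite} set"
  shows "of_nat (card (shifted A H g)) = (\<Sum>x\<in>H. if x + g \<in> A then 1 else (0 :: 'b::semiring_1))"
  unfolding shifted_def by (simp add: sum.If_cases Int_def)

lemmas card_shifted_eq_sum = of_nat_card_shifted_eq_sum[where 'b = nat, unfolded of_nat_id]

definition coset_density :: "'a::ab_group_add set \<Rightarrow> 'a set \<Rightarrow> 'a \<Rightarrow> real" where
  "coset_density A H g = card (shifted A H g) / card H"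

lemma ind_eq_sum_coset_density:
  fixes H :: "'a::{ab_group_add,finite} set"
  shows "ind A H = (\<Sum>g\<in>UNIV. coset_density A H g ^ 2) / CARD('a)"
  unfolding ind_def coset_density_def by simp

lemma card_shifted_translate:
  fixes S :: "'a::{ab_group_add,finite} set"
  assumes "is_subgroup S" "t \<in> S"
  shows "card (shifted A S (g + t)) = card (shifted A S g)"
  unfolding card_shifted_eq_sum
  using sum_translate_subgroup[OF assms, of "\<lambda>x. if x + g \<in> A then 1 else 0"]
  by (simp add: add.commute add.left_commute)

lemma coset_density_translate:
  fixes S :: "'a::{ab_group_add,finite} set"
  assumes "is_subgroup S" "t \<in> S"
  shows "coset_density A S (g + t) = coset_density A S g"
  unfolding coset_density_def using card_shifted_translate[OF assms] by simp

lemma sum_card_shifted_subgroup: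
  fixes S T :: "'a::{ab_group_add,finite} set"
  assumes T: "is_subgroup T" and "S \<subseteq> T"
  shows "(\<Sum>t\<in>T. card (shifted A S (g + t))) = card S * card (shifted A T g)"
proof -
  have "(\<Sum>t\<in>T. card (shifted A S (g + t)))
      = (\<Sum>x\<in>S. \<Sum>t\<in>T. if (t + x) + g \<in> A then 1 else 0)"
    unfolding card_shifted_eq_sum by (subst sum.swap) (simp add: ac_simps)
  also have "\<dots> = (\<Sum>x\<in>S. \<Sum>t\<in>T. if t + g \<in> A then 1 else 0)"
  proof (rule sum.cong[OF refl])
    fix x assume "x \<in> S"
    with \<open>S \<subseteq> T\<close> have "x \<in> T" by blast
    then show "(\<Sum>t\<in>T. if t + x + g \<in> A then 1 else 0) = (\<Sum>t\<in>T. if t + g \<in> A then 1 else 0)"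
      using sum_translate_subgroup[OF T, of x "\<lambda>t. if t + g \<in> A then 1 else 0"] by simp
  qed
  finally show ?thesis by (simp add: card_shifted_eq_sum)
qed

lemma sum_coset_density_subgroup:
  fixes S T :: "'a::{ab_group_add,finite} set"
  assumes "is_subgroup S" "is_subgroup T" "S \<subseteq> T"
  shows "(\<Sum>t\<in>T. coset_density A S (g + t)) = card T * coset_density A T g"
proof -
  have "(\<Sum>t\<in>T. coset_density A S (g + t)) = (\<Sum>t\<in>T. card (shifted A S (g + t))) / card S"
    unfolding coset_density_def by (simp add: sum_divide_distrib)
  also have "\<dots> = card (shifted A T g)"
    using sum_card_shifted_subgroup[OF assms(2,3)] card_subgroup_pos[OF assms(1)]
    by (simp add: card_gt_0_iff)
  finally show ?thesis
    using card_subgroup_pos[OF assms(2)] by (simp add: coset_density_def card_gt_0_iff)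
qed

lemma coset_density_square_le_average:
  fixes S T :: "'a::{ab_group_add,finite} set"
  assumes "is_subgroup S" "is_subgroup T" "S \<subseteq> T"
  shows "card T * coset_density A T g ^ 2 \<le> (\<Sum>t\<in>T. coset_density A S (g + t) ^ 2)"
proof -
  have "(card T * coset_density A T g) ^ 2 \<le> (\<Sum>t\<in>T. coset_density A S (g + t) ^ 2) * card T"
    using sum_squared_le_sum_of_squares[of "\<lambda>t. coset_density A S (g + t)" T]
    by (simp add: sum_coset_density_subgroup[OF assms])
  then show ?thesis
    using card_subgroup_pos[OF assms(2)] by (simp add: power2_eq_square mult_ac)
qed

lemma sum_coset_density_square_refine:
  fixes S T H :: "'a::{ab_group_add,finite} set"
  assumes S: "is_subgroup S" and T: "is_subgroup T" and H: "is_subgroup H"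
    and "S \<subseteq> T" "T \<subseteq> H"
  shows "(\<Sum>h\<in>H. coset_density A T (g + h) ^ 2) \<le> (\<Sum>h\<in>H. coset_density A S (g + h) ^ 2)"
proof -
  have "card T * (\<Sum>h\<in>H. coset_density A T (g + h) ^ 2)
      \<le> (\<Sum>h\<in>H. \<Sum>t\<in>T. coset_density A S (g + (h + t)) ^ 2)"
    unfolding sum_distrib_left
    using coset_density_square_le_average[OF S T \<open>S \<subseteq> T\<close>, of A "g + h" for h]
    by (intro sum_mono) (simp add: add.assoc)
  also have "\<dots> = (\<Sum>t\<in>T. \<Sum>h\<in>H. coset_density A S (g + (h + t)) ^ 2)"
    by (rule sum.swap)
  also have "\<dots> = card T * (\<Sum>h\<in>H. coset_density A S (g + h) ^ 2)"
    using sum_translate_subgroup[OF H, of _ "\<lambda>h. coset_density A S (g + h) ^ 2"] \<open>T \<subseteq> H\<close>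
    by (simp add: subset_iff)
  finally show ?thesis
    using card_subgroup_pos[OF T] by simp
qed

lemma coset_eq_diff_mem:
  fixes S :: "'a::ab_group_add set"
  shows "(\<lambda>h. g + h) ` S = {x. x - g \<in> S}"
  by (force simp: image_iff algebra_simps)

lemma cosets_disjoint:
  assumes S: "is_subgroup S" and "c1 \<in> quotient_set S" "c2 \<in> quotient_set S" "c1 \<noteq> c2"
  shows "c1 \<inter> c2 = {}"
proof (rule ccontr)
  obtain g1 g2 where g: "c1 = {x. x - g1 \<in> S}" "c2 = {x. x - g2 \<in> S}"
    using assms(2,3) unfolding quotient_set_def coset_eq_diff_mem by blast
  assume "c1 \<inter> c2 \<noteq> {}"
  then obtain y where "y - g1 \<in> S" "y - g2 \<in> S"
    using g by blast
  then have "g2 - g1 \<in> S"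
    using is_subgroup_diff[OF S] by fastforce
  then have "x - g1 \<in> S \<longleftrightarrow> x - g2 \<in> S" for x
    using is_subgroup_add[OF S, of "x - g2" "g2 - g1"] is_subgroup_diff[OF S, of "x - g1" "g2 - g1"]
    by auto
  then have "c1 = c2"
    using g by blast
  with \<open>c1 \<noteq> c2\<close> show False ..
qed

lemma card_coset:
  fixes S :: "'a::ab_group_add set"
  shows "c \<in> quotient_set S \<Longrightarrow> card c = card S"
  unfolding quotient_set_def by (auto intro!: card_image simp: inj_on_def)

lemma card_Union_cosets:
  fixes S :: "'a::{ab_group_add,finite} set"
  assumes "is_subgroup S" "D \<subseteq> quotient_set S"
  shows "card (\<Union>D) = card S * card D"
  using card_partition[of D "card S"] card_coset[of _ S] cosets_disjoint[OF assms(1)] assms(2)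
  by (auto simp: subset_iff mult.commute)

lemma card_quotient_set:
  fixes S :: "'a::{ab_group_add,finite} set"
  assumes "is_subgroup S"
  shows "card S * card (quotient_set S) = CARD('a)"
proof -
  have "\<Union>(quotient_set S) = UNIV"
    using is_subgroup_zero[OF assms] unfolding quotient_set_def by force
  then show ?thesis
    using card_Union_cosets[OF assms order_refl] by simp
qed

lemma character_add:
  "is_character H chi \<Longrightarrow> x \<in> H \<Longrightarrow> y \<in> H \<Longrightarrow> chi (x + y) = chi x * chi y"
  by (simp add: is_character_def)

lemma character_zero:
  assumes "is_subgroup H" "is_character H chi"
  shows "chi 0 = 1"
proof -
  have "0 \<in> H"
    using assms(1) by (rule is_subgroup_zero)
  then have "chi 0 * chi 0 = chi 0 * 1" "chi 0 \<noteq> 0"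
    using character_add[OF assms(2), of 0 0] assms(2) by (auto simp: is_character_def)
  then show ?thesis
    by simp
qed

lemma character_sign:
  assumes "is_subgroup H" "is_character H chi" "x \<in> H" "x + x = 0"
  shows "chi x = 1 \<or> chi x = -1"
proof -
  have "(chi x) ^ 2 = 1"
    using character_add[OF assms(2,3,3)] character_zero[OF assms(1,2)] assms(4)
    by (simp add: power2_eq_square)
  then show ?thesis
    by (simp add: power2_eq_1_iff)
qed

lemma is_subgroup_common_kernel:
  assumes H: "is_subgroup H" and chi: "\<forall>c\<in>D. is_character H (chi c)"
  shows "is_subgroup {x \<in> H. \<forall>c\<in>D. chi c x = 1}"
  unfolding is_subgroup_def
proof (intro conjI ballI)
  show "0 \<in> {x \<in> H. \<forall>c\<in>D. chi c x = 1}"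
    using is_subgroup_zero[OF H] character_zero[OF H] chi by blast
next
  fix x y assume x: "x \<in> {x \<in> H. \<forall>c\<in>D. chi c x = 1}" and y: "y \<in> {x \<in> H. \<forall>c\<in>D. chi c x = 1}"
  have "x + y \<in> H"
    using x y is_subgroup_add[OF H] by blast
  moreover have "chi c (x + y) = 1" if "c \<in> D" for c
    using character_add[of H "chi c" x y] chi x y that by simp
  ultimately show "x + y \<in> {x \<in> H. \<forall>c\<in>D. chi c x = 1}"
    by blast
next
  fix x assume x: "x \<in> {x \<in> H. \<forall>c\<in>D. chi c x = 1}"
  have "- x \<in> H"
    using x H by (simp add: is_subgroup_def)
  moreover have "chi c (- x) = 1" if "c \<in> D" for c
    using character_add[of H "chi c" x "- x"] character_zero[OF H, of "chi c"] chi x \<open>- x \<in> H\<close> that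
    by simp
  ultimately show "- x \<in> {x \<in> H. \<forall>c\<in>D. chi c x = 1}"
    by blast
qed

lemma sum_split_kernel:
  fixes H :: "'a::{ab_group_add,finite} set"
  assumes H: "is_subgroup H" and two: "\<forall>x\<in>H. x + x = 0" and chi: "is_character H chi"
    and s: "s \<in> H" "chi s = -1"
  shows "(\<Sum>x\<in>H. f x) = (\<Sum>x\<in>{x \<in> H. chi x = 1}. f x + f (x + s))"
proof -
  let ?K = "{x \<in> H. chi x = 1}"
  have sign: "chi x = -1" if "x \<in> H" "chi x \<noteq> 1" for x
    using character_sign[OF H chi that(1)] two that by auto
  have mult_s: "chi (x + s) = - chi x" if "x \<in> H" for x
    using character_add[OF chi that s(1)] s(2) by simp
  have "bij_betw (\<lambda>x. x + s) ?K (H - ?K)"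
  proof (rule bij_betw_byWitness[where f' = "\<lambda>x. x + s"])
    have "x + s + s = x" for x
      using two s(1) by (simp add: add.assoc)
    then show "\<forall>x\<in>?K. x + s + s = x" "\<forall>x\<in>H - ?K. x + s + s = x"
      by simp_all
    have "chi (x + s) = 1" if "x \<in> H" "chi x \<noteq> 1" for x
      using mult_s[OF that(1)] sign[OF that] by simp
    then show "(\<lambda>x. x + s) ` ?K \<subseteq> H - ?K" "(\<lambda>x. x + s) ` (H - ?K) \<subseteq> ?K"
      using is_subgroup_add[OF H _ s(1)] mult_s by auto
  qed
  then have "(\<Sum>x\<in>H - ?K. f x) = (\<Sum>x\<in>?K. f (x + s))"
    by (rule sum.reindex_bij_betw[symmetric])
  moreover have "(\<Sum>x\<in>H. f x) = (\<Sum>x\<in>H - ?K. f x) + (\<Sum>x\<in>?K. f x)"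
    by (rule sum.subset_diff) auto
  ultimately show ?thesis
    by (simp add: sum.distrib add.commute)
qed

lemma is_character_subset: "is_character H chi \<Longrightarrow> S \<subseteq> H \<Longrightarrow> is_character S chi"
  unfolding is_character_def by blast

lemma card_le_double_kernel:
  fixes H S :: "'a::{ab_group_add,finite} set"
  assumes H: "is_subgroup H" and two: "\<forall>x\<in>H. x + x = 0" and chi: "is_character H chi"
    and S: "is_subgroup S" "S \<subseteq> H"
  shows "card S \<le> 2 * card {x \<in> S. chi x = 1}"
proof (cases "\<forall>x\<in>S. chi x = 1")
  case True
  then have "{x \<in> S. chi x = 1} = S" by blast
  then show ?thesis by simp
next
  case False
  then obtain s where s: "s \<in> S" "chi s \<noteq> 1" by blast
  with S(2) two have "chi s = -1"
    using character_sign[OF H chi] by blast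
  moreover have "\<forall>x\<in>S. x + x = 0"
    using two S(2) by blast
  ultimately show ?thesis
    using sum_split_kernel[OF S(1) _ is_character_subset[OF chi S(2)] s(1), of "\<lambda>_. 1 :: nat"] by simp
qed

lemma card_le_common_kernel:
  fixes H :: "'a::{ab_group_add,finite} set"
  assumes H: "is_subgroup H" and two: "\<forall>x\<in>H. x + x = 0"
    and "finite D" "\<forall>c\<in>D. is_character H (chi c)"
  shows "card H \<le> 2 ^ card D * card {x \<in> H. \<forall>c\<in>D. chi c x = 1}"
  using assms(3,4)
proof (induction D rule: finite_induct)
  case empty
  then show ?case by simp
next
  case (insert c D)
  let ?S = "{x \<in> H. \<forall>c\<in>D. chi c x = 1}"
  have "is_subgroup ?S"
    using is_subgroup_common_kernel[OF H] insert.prems by blast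
  have "card H \<le> 2 ^ card D * card ?S"
    using insert by simp
  also have "\<dots> \<le> 2 ^ card D * (2 * card {x \<in> ?S. chi c x = 1})"
    using card_le_double_kernel[OF H two _ \<open>is_subgroup ?S\<close>] insert.prems by auto
  also have "{x \<in> ?S. chi c x = 1} = {x \<in> H. \<forall>c\<in>insert c D. chi c x = 1}"
    by auto
  also have "2 ^ card D * (2 * n) = 2 ^ card (insert c D) * n" for n :: nat
    using insert.hyps by simp
  finally show ?case .
qed

lemma card_quotient_common_kernel:
  fixes H :: "'a::{ab_group_add,finite} set"
  assumes H: "is_subgroup H" and two: "\<forall>x\<in>H. x + x = 0"
    and chi: "finite D" "\<forall>c\<in>D. is_character H (chi c)"
  shows "card (quotient_set {x \<in> H. \<forall>c\<in>D. chi c x = 1}) \<le> 2 ^ card D * card (quotient_set H)"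
proof -
  let ?K = "{x \<in> H. \<forall>c\<in>D. chi c x = 1}"
  have K: "is_subgroup ?K"
    using is_subgroup_common_kernel[OF H chi(2)] .
  have "card ?K * card (quotient_set ?K) = card H * card (quotient_set H)"
    using card_quotient_set[OF K] card_quotient_set[OF H] by simp
  also have "\<dots> \<le> (2 ^ card D * card ?K) * card (quotient_set H)"
    using card_le_common_kernel[OF H two chi] by (rule mult_le_mono1)
  also have "\<dots> = card ?K * (2 ^ card D * card (quotient_set H))"
    by (simp add: algebra_simps)
  finally have "card ?K * card (quotient_set ?K) \<le> card ?K * (2 ^ card D * card (quotient_set H))" .
  with card_subgroup_pos[OF K] show ?thesis
    by (meson mult_le_cancel1)
qed

lemma is_subgroup_kernel:
  assumes "is_subgroup H" "is_character H chi"
  shows "is_subgroup {x \<in> H. chi x = 1}"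
  using is_subgroup_common_kernel[OF assms(1), of "{chi}" "\<lambda>c. c"] assms(2) by simp

definition fourier_coeff ::
    "'a::ab_group_add set \<Rightarrow> 'a set \<Rightarrow> 'a \<Rightarrow> ('a \<Rightarrow> complex) \<Rightarrow> complex" where
  "fourier_coeff A H g chi = (\<Sum>x\<in>H. (if x + g \<in> A then 1 else 0) * chi x)"

lemma regular_value_iff_fourier_coeff:
  "regular_value \<epsilon> A H g \<longleftrightarrow>
     (\<forall>chi. nontrivial_character H chi \<longrightarrow> cmod (fourier_coeff A H g chi) \<le> \<epsilon> * card H)"
proof -
  have "(\<Sum>x\<in>H. (if x \<in> shifted A H g then 1 else 0) * chi x) = fourier_coeff A H g chi" for chi
    unfolding fourier_coeff_def shifted_def by (rule sum.cong) auto
  then show ?thesis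
    unfolding regular_value_def by simp
qed

lemma fourier_coeff_translate:
  assumes H: "is_subgroup H" and chi: "is_character H chi" and h: "h \<in> H"
  shows "fourier_coeff A H (g + h) chi = chi (- h) * fourier_coeff A H g chi"
proof -
  have h': "- h \<in> H"
    using H h by (simp add: is_subgroup_def)
  have "fourier_coeff A H (g + h) chi
      = (\<Sum>x\<in>H. (if (x + - h) + (g + h) \<in> A then 1 else 0) * chi (x + - h))"
    unfolding fourier_coeff_def by (rule sum_translate_subgroup[OF H h', symmetric])
  also have "\<dots> = (\<Sum>x\<in>H. chi (- h) * ((if x + g \<in> A then 1 else 0) * chi x))"
  proof (rule sum.cong[OF refl])
    fix x assume "x \<in> H"
    then have "chi (x + - h) = chi (- h) * chi x"
      using character_add[OF chi _ h'] by (simp add: mult.commute)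
    moreover have "x + - h + (g + h) = x + g"
      by (simp add: algebra_simps)
    ultimately show "(if x + - h + (g + h) \<in> A then 1 else 0) * chi (x + - h)
        = chi (- h) * ((if x + g \<in> A then 1 else 0) * chi x)"
      by simp
  qed
  also have "\<dots> = chi (- h) * fourier_coeff A H g chi"
    by (simp add: fourier_coeff_def sum_distrib_left)
  finally show ?thesis .
qed

lemma norm_fourier_coeff_translate:
  assumes H: "is_subgroup H" and two: "\<forall>x\<in>H. x + x = 0" and chi: "is_character H chi"
    and h: "h \<in> H"
  shows "cmod (fourier_coeff A H (g + h) chi) = cmod (fourier_coeff A H g chi)"
proof -
  have "- h \<in> H"
    using H h by (simp add: is_subgroup_def)
  then have "cmod (chi (- h)) = 1"
    using character_sign[OF H chi] two by fastforce
  then show ?thesis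
    by (simp add: fourier_coeff_translate[OF H chi h] norm_mult)
qed

lemma regular_value_translate:
  assumes H: "is_subgroup H" and two: "\<forall>x\<in>H. x + x = 0" and h: "h \<in> H"
  shows "regular_value \<epsilon> A H (g + h) \<longleftrightarrow> regular_value \<epsilon> A H g"
  unfolding regular_value_iff_fourier_coeff
  using norm_fourier_coeff_translate[OF H two _ h] by (auto simp: nontrivial_character_def)

lemma fourier_coeff_kernel_split:
  fixes H :: "'a::{ab_group_add,finite} set"
  assumes H: "is_subgroup H" and two: "\<forall>x\<in>H. x + x = 0" and chi: "is_character H chi"
    and s: "s \<in> H" "chi s = -1" and K: "K = {x \<in> H. chi x = 1}"
  shows "fourier_coeff A H g chi
    = of_real (real (card (shifted A K g)) - real (card (shifted A K (g + s))))"
proof -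
  have "chi (x + s) = -1" if "x \<in> K" for x
    using character_add[OF chi _ s(1), of x] s(2) that K by simp
  then have "fourier_coeff A H g chi
      = (\<Sum>x\<in>K. (if x + g \<in> A then 1 else 0) - (if x + (g + s) \<in> A then 1 else 0))"
    unfolding fourier_coeff_def sum_split_kernel[OF H two chi s] K[symmetric]
    by (intro sum.cong refl) (use K in \<open>auto simp: ac_simps\<close>)
  then show ?thesis
    by (simp add: sum_subtractf flip: of_nat_card_shifted_eq_sum)
qed

lemma coset_density_kernel_split:
  fixes H :: "'a::{ab_group_add,finite} set"
  assumes H: "is_subgroup H" and two: "\<forall>x\<in>H. x + x = 0" and chi: "nontrivial_character H chi"
    and K: "K = {x \<in> H. chi x = 1}"
  obtains s where
    "2 * coset_density A H g = coset_density A K g + coset_density A K (g + s)"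
    "2 * cmod (fourier_coeff A H g chi)
       = card H * \<bar>coset_density A K g - coset_density A K (g + s)\<bar>"
    "2 * (\<Sum>h\<in>H. coset_density A K (g + h) ^ 2)
       = card H * (coset_density A K g ^ 2 + coset_density A K (g + s) ^ 2)"
proof -
  have ch: "is_character H chi"
    using chi by (simp add: nontrivial_character_def)
  obtain s where s: "s \<in> H" "chi s = -1"
    using chi character_sign[OF H ch] two by (auto simp: nontrivial_character_def)
  have split: "(\<Sum>x\<in>H. f x) = (\<Sum>x\<in>K. f x + f (x + s))" for f :: "_ \<Rightarrow> 'b::comm_monoid_add"
    unfolding K by (rule sum_split_kernel[OF H two ch s])
  have KH: "is_subgroup K" "K \<subseteq> H"
    using is_subgroup_kernel[OF H ch] K by auto
  have card_K: "card K \<noteq> 0"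
    using card_subgroup_pos[OF KH(1)] by (rule gr_implies_not0)
  have card_H: "real (card H) = 2 * card K"
    using split[of "\<lambda>_. 1 :: nat"] by simp
  have "card (shifted A H g) = card (shifted A K g) + card (shifted A K (g + s))"
    unfolding card_shifted_eq_sum split by (simp add: sum.distrib ac_simps)
  then have density: "2 * coset_density A H g = coset_density A K g + coset_density A K (g + s)"
    using card_K unfolding coset_density_def card_H by (simp add: field_simps)
  have "cmod (fourier_coeff A H g chi)
      = \<bar>real (card (shifted A K g)) - real (card (shifted A K (g + s)))\<bar>"
    unfolding fourier_coeff_kernel_split[OF H two ch s K] by (simp only: norm_of_real)
  then have fourier: "2 * cmod (fourier_coeff A H g chi)
      = card H * \<bar>coset_density A K g - coset_density A K (g + s)\<bar>"
    using card_K unfolding coset_density_def card_H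
    by (simp add: diff_divide_distrib[symmetric] abs_divide)
  have "2 * (\<Sum>h\<in>H. coset_density A K (g + h) ^ 2)
      = card H * (coset_density A K g ^ 2 + coset_density A K (g + s) ^ 2)"
    unfolding split card_H using coset_density_translate[OF KH(1)]
    by (simp add: add.assoc[symmetric] add.commute[of _ s])
  with density fourier show ?thesis
    by (rule that)
qed

lemma sum_coset_density_square_gain:
  fixes H S :: "'a::{ab_group_add,finite} set" and \<epsilon> :: real
  assumes H: "is_subgroup H" and two: "\<forall>x\<in>H. x + x = 0" and chi: "nontrivial_character H chi"
    and S: "is_subgroup S" "S \<subseteq> {x \<in> H. chi x = 1}" and "0 \<le> \<epsilon>"
    and large: "\<epsilon> * card H < cmod (fourier_coeff A H g chi)"
  shows "card H * (coset_density A H g ^ 2 + \<epsilon> ^ 2) \<le> (\<Sum>h\<in>H. coset_density A S (g + h) ^ 2)"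
proof -
  define K where "K = {x \<in> H. chi x = 1}"
  have K: "is_subgroup K" "K \<subseteq> H"
    using is_subgroup_kernel[OF H] chi K_def by (auto simp: nontrivial_character_def)
  obtain s where split:
    "2 * coset_density A H g = coset_density A K g + coset_density A K (g + s)"
    "2 * cmod (fourier_coeff A H g chi)
       = card H * \<bar>coset_density A K g - coset_density A K (g + s)\<bar>"
    "2 * (\<Sum>h\<in>H. coset_density A K (g + h) ^ 2)
       = card H * (coset_density A K g ^ 2 + coset_density A K (g + s) ^ 2)"
    using coset_density_kernel_split[OF H two chi K_def] .
  define x y where "x = coset_density A K g" and "y = coset_density A K (g + s)"
  have pos: "0 < real (card H)"
    using card_subgroup_pos[OF H] by simp
  have "card H * (2 * \<epsilon>) < card H * \<bar>x - y\<bar>"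
    using large split(2) unfolding x_def y_def by (simp add: mult_ac)
  then have "2 * \<epsilon> < \<bar>x - y\<bar>"
    using pos by simp
  then have "\<epsilon> ^ 2 \<le> (\<bar>x - y\<bar> / 2) ^ 2"
    using \<open>0 \<le> \<epsilon>\<close> by (intro power_mono) simp_all
  moreover have "(x ^ 2 + y ^ 2) / 2 = ((x + y) / 2) ^ 2 + (\<bar>x - y\<bar> / 2) ^ 2"
    by (simp add: power2_eq_square field_simps)
  ultimately have "((x + y) / 2) ^ 2 + \<epsilon> ^ 2 \<le> (x ^ 2 + y ^ 2) / 2"
    by linarith
  moreover have "coset_density A H g = (x + y) / 2"
    using split(1) unfolding x_def y_def by simp
  ultimately have "coset_density A H g ^ 2 + \<epsilon> ^ 2 \<le> (x ^ 2 + y ^ 2) / 2"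
    by (simp only:)
  then have "card H * (coset_density A H g ^ 2 + \<epsilon> ^ 2) \<le> card H * ((x ^ 2 + y ^ 2) / 2)"
    using pos by simp
  also have "\<dots> = (\<Sum>h\<in>H. coset_density A K (g + h) ^ 2)"
    using split(3) unfolding x_def y_def by (simp add: field_simps)
  also have "\<dots> \<le> (\<Sum>h\<in>H. coset_density A S (g + h) ^ 2)"
    using sum_coset_density_square_refine[OF S(1) K(1) H] S(2) K K_def by blast
  finally show ?thesis .
qed

lemma ind_gain_from_characters:
  fixes H H' :: "'a::{ab_group_add,finite} set" and \<epsilon> :: real
  assumes H: "is_subgroup H" and two: "\<forall>x\<in>H. x + x = 0"
    and H': "is_subgroup H'" "H' \<subseteq> H" and "0 \<le> \<epsilon>"
    and cover: "\<epsilon> * CARD('a) \<le> card (\<Union>C)"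
    and chi: "\<forall>c\<in>C. nontrivial_character H (chi c) \<and> H' \<subseteq> {x \<in> H. chi c x = 1}
                  \<and> (\<forall>g\<in>c. \<epsilon> * card H < cmod (fourier_coeff A H g (chi c)))"
  shows "ind A H + \<epsilon> ^ 3 \<le> ind A H'"
proof -
  define U where "U = \<Union>C"
  let ?d = "coset_density A H" and ?d' = "coset_density A H'"
  have local: "card H * (?d g ^ 2 + (if g \<in> U then \<epsilon> ^ 2 else 0)) \<le> (\<Sum>h\<in>H. ?d' (g + h) ^ 2)"
    for g
  proof (cases "g \<in> U")
    case True
    then obtain c where "c \<in> C" "g \<in> c"
      unfolding U_def by blast
    then have "nontrivial_character H (chi c)" "H' \<subseteq> {x \<in> H. chi c x = 1}"
      "\<epsilon> * card H < cmod (fourier_coeff A H g (chi c))"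
      using chi by auto
    then show ?thesis
      using sum_coset_density_square_gain[OF H two _ H'(1) _ \<open>0 \<le> \<epsilon>\<close>] True by simp
  next
    case False
    then show ?thesis
      using coset_density_square_le_average[OF H'(1) H H'(2)] by simp
  qed
  have "(\<Sum>g\<in>UNIV. if g \<in> U then \<epsilon> ^ 2 else 0) = \<epsilon> ^ 2 * card U"
    by (simp add: sum.If_cases)
  then have "(\<Sum>g\<in>UNIV. ?d g ^ 2) + \<epsilon> ^ 2 * card U
      = (\<Sum>g\<in>UNIV. ?d g ^ 2 + (if g \<in> U then \<epsilon> ^ 2 else 0))"
    by (simp add: sum.distrib)
  also have "\<dots> \<le> (\<Sum>g\<in>UNIV. (\<Sum>h\<in>H. ?d' (g + h) ^ 2) / card H)"
    using local card_subgroup_pos[OF H] by (intro sum_mono) (simp add: pos_le_divide_eq mult.commute)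
  also have "\<dots> = (\<Sum>g\<in>UNIV. ?d' g ^ 2)"
    unfolding sum_divide_distrib[symmetric]
    by (rule sum_UNIV_average_subgroup[OF H, of "\<lambda>g. ?d' g ^ 2", symmetric])
  finally have "(\<Sum>g\<in>UNIV. ?d g ^ 2) + \<epsilon> ^ 3 * CARD('a) \<le> (\<Sum>g\<in>UNIV. ?d' g ^ 2)"
    using mult_left_mono[OF cover, of "\<epsilon> ^ 2"] unfolding U_def
    by (simp add: power3_eq_cube power2_eq_square mult_ac)
  then have "((\<Sum>g\<in>UNIV. ?d g ^ 2) + \<epsilon> ^ 3 * CARD('a)) / CARD('a)
      \<le> (\<Sum>g\<in>UNIV. ?d' g ^ 2) / CARD('a)"
    by (rule divide_right_mono) simp
  then show ?thesis
    unfolding ind_eq_sum_coset_density by (simp add: add_divide_distrib finite_UNIV_card_ge_0)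
qed

lemma irregular_coset_character:
  fixes H :: "'a::{ab_group_add,finite} set"
  assumes H: "is_subgroup H" and two: "\<forall>x\<in>H. x + x = 0"
    and c: "c \<in> quotient_set H" "\<forall>g\<in>c. \<not> regular_value \<epsilon> A H g"
  shows "\<exists>chi. nontrivial_character H chi
    \<and> (\<forall>g\<in>c. \<epsilon> * card H < cmod (fourier_coeff A H g chi))"
proof -
  obtain r where r: "c = (\<lambda>h. r + h) ` H"
    using c(1) unfolding quotient_set_def by blast
  then have "\<not> regular_value \<epsilon> A H r"
    using c(2) is_subgroup_zero[OF H] by force
  then obtain chi where chi: "nontrivial_character H chi" "\<epsilon> * card H < cmod (fourier_coeff A H r chi)"
    unfolding regular_value_iff_fourier_coeff by (auto simp: not_le)
  then have "\<epsilon> * card H < cmod (fourier_coeff A H (r + h) chi)" if "h \<in> H" for h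
    using norm_fourier_coeff_translate[OF H two _ that] by (simp add: nontrivial_character_def)
  then show ?thesis
    using chi(1) r by blast
qed

lemma irregular_values_eq_Union_cosets:
  assumes H: "is_subgroup H" and two: "\<forall>x\<in>H. x + x = 0"
  shows "{g. \<not> regular_value \<epsilon> A H g}
    = \<Union>{c \<in> quotient_set H. c \<subseteq> {g. \<not> regular_value \<epsilon> A H g}}"
proof
  show "{g. \<not> regular_value \<epsilon> A H g}
      \<subseteq> \<Union>{c \<in> quotient_set H. c \<subseteq> {g. \<not> regular_value \<epsilon> A H g}}"
  proof
    fix g assume "g \<in> {g. \<not> regular_value \<epsilon> A H g}"
    then have "(\<lambda>h. g + h) ` H \<in> {c \<in> quotient_set H. c \<subseteq> {g. \<not> regular_value \<epsilon> A H g}}"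
      using regular_value_translate[OF H two] unfolding quotient_set_def by auto
    moreover have "g \<in> (\<lambda>h. g + h) ` H"
      using is_subgroup_zero[OF H] by force
    ultimately show "g \<in> \<Union>{c \<in> quotient_set H. c \<subseteq> {g. \<not> regular_value \<epsilon> A H g}}"
      by blast
  qed
qed auto

lemma card_irregular_cosets_gt:
  fixes H :: "'a::{ab_group_add,finite} set"
  assumes H: "is_subgroup H" and two: "\<forall>x\<in>H. x + x = 0"
    and irregular: "\<not> eps_regular \<epsilon> A H"
  shows "\<epsilon> * card (quotient_set H)
    < card {c \<in> quotient_set H. c \<subseteq> {g. \<not> regular_value \<epsilon> A H g}}"
proof -
  let ?B = "{g. \<not> regular_value \<epsilon> A H g}"
  let ?NC = "{c \<in> quotient_set H. c \<subseteq> ?B}"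
  have "card ?B = card (\<Union>?NC)"
    using irregular_values_eq_Union_cosets[OF H two] by (rule arg_cong)
  also have "\<dots> = card H * card ?NC"
    by (rule card_Union_cosets[OF H]) blast
  finally have card_B: "card ?B = card H * card ?NC" .
  have N: "real CARD('a) = card H * card (quotient_set H)"
    using card_quotient_set[OF H] by (metis of_nat_mult)
  have "card H * (\<epsilon> * card (quotient_set H)) < card H * real (card ?NC)"
    using irregular[unfolded eps_regular_def card_B N] by (simp add: mult_ac)
  then show ?thesis
    using card_subgroup_pos[OF H] by simp
qed

lemma obtain_irregular_cosets:
  fixes H :: "'a::{ab_group_add,finite} set"
  assumes H: "is_subgroup H" and two: "\<forall>x\<in>H. x + x = 0" and "0 \<le> \<epsilon>"
    and irregular: "\<not> eps_regular \<epsilon> A H"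
  obtains C chi where "C \<subseteq> quotient_set H" "card C = nat \<lceil>\<epsilon> * card (quotient_set H)\<rceil>"
    "\<epsilon> * CARD('a) \<le> card (\<Union>C)"
    "\<forall>c\<in>C. nontrivial_character H (chi c)
       \<and> (\<forall>g\<in>c. \<epsilon> * card H < cmod (fourier_coeff A H g (chi c)))"
proof -
  let ?NC = "{c \<in> quotient_set H. c \<subseteq> {g. \<not> regular_value \<epsilon> A H g}}"
  have "nat \<lceil>\<epsilon> * card (quotient_set H)\<rceil> \<le> card ?NC"
    using less_imp_le[OF card_irregular_cosets_gt[OF H two irregular]]
    by (simp add: nat_le_iff ceiling_le_iff)
  then obtain C where C: "C \<subseteq> ?NC" "card C = nat \<lceil>\<epsilon> * card (quotient_set H)\<rceil>"
    by (rule obtain_subset_with_card_n)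
  have "\<epsilon> * CARD('a) = card H * (\<epsilon> * card (quotient_set H))"
    using card_quotient_set[OF H] by (metis mult.left_commute of_nat_mult)
  also have "\<dots> \<le> card H * real (card C)"
    unfolding C(2) by (intro mult_left_mono real_nat_ceiling_ge) simp
  also have "\<dots> = card (\<Union>C)"
    using card_Union_cosets[OF H] C(1) by (simp add: subset_iff)
  finally have cover: "\<epsilon> * CARD('a) \<le> card (\<Union>C)" .
  have "\<forall>c\<in>C. \<exists>chi. nontrivial_character H chi
      \<and> (\<forall>g\<in>c. \<epsilon> * card H < cmod (fourier_coeff A H g chi))"
    using irregular_coset_character[OF H two] C(1) by blast
  then obtain chi where "\<forall>c\<in>C. nontrivial_character H (chi c)
      \<and> (\<forall>g\<in>c. \<epsilon> * card H < cmod (fourier_coeff A H g (chi c)))"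
    by metis
  with that C cover show ?thesis
    by blast
qed

lemma card_bit: "CARD(bit) = 2"
proof -
  have "(UNIV :: bit set) = {0, 1}"
    using bit_not_zero_iff by auto
  then show ?thesis
    by (metis card_2_iff zero_neq_one)
qed

lemma vec_bit_add_self: "(x :: bit ^ 'n::finite) + x = 0"
  by (simp add: vec_eq_iff)

lemma card_quotient_set_vec_bit:
  assumes "is_subgroup (H :: (bit ^ 'n::finite) set)"
  obtains m where "card (quotient_set H) = 2 ^ m"
proof -
  have "card H * card (quotient_set H) = 2 ^ CARD('n)"
    using card_quotient_set[OF assms] by (simp add: card_bit)
  then have "card (quotient_set H) dvd 2 ^ CARD('n)"
    by (metis dvd_triv_right)
  then show ?thesis
    using that divides_primepow_nat[OF two_is_prime_nat] by blast
qed

lemma two_power_ceiling_le: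
  fixes e :: real
  assumes "e \<le> 1/2"
  shows "2 ^ m * 2 ^ nat \<lceil>e * 2 ^ m\<rceil> \<le> (2::nat) ^ 2 ^ m"
proof -
  have "m + nat \<lceil>e * 2 ^ m\<rceil> \<le> 2 ^ m"
  proof (cases m)
    case 0
    then show ?thesis
      using assms by (simp add: nat_le_iff ceiling_le_iff)
  next
    case (Suc k)
    have "e * 2 ^ m \<le> 2 ^ k"
      using assms Suc by simp
    then have "nat \<lceil>e * 2 ^ m\<rceil> \<le> 2 ^ k"
      by (simp add: nat_le_iff ceiling_le_iff)
    moreover have "Suc k \<le> 2 ^ k"
      by (rule Suc_leI) simp
    moreover have "(2::nat) ^ m = 2 * 2 ^ k"
      using Suc by simp
    ultimately show ?thesis
      using Suc by linarith
  qed
  then show ?thesis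
    by (simp add: power_add[symmetric])
qed

theorem lemma2p2:
  fixes A H :: "(bit ^ 'n::finite) set" and \<epsilon> :: real
  assumes "0 < \<epsilon>" and "\<epsilon> < 1/2"
    and "is_subgroup H"
    and "\<not> eps_regular \<epsilon> A H"
  shows "\<exists>H'. is_subgroup H' \<and> H' \<subseteq> H
           \<and> card (quotient_set H') \<le> 2 ^ card (quotient_set H)
           \<and> ind A H' \<ge> ind A H + \<epsilon> ^ 3"
proof -
  have two: "\<forall>x\<in>H. x + x = 0" and eps: "0 \<le> \<epsilon>"
    using assms(1) by (simp_all add: vec_bit_add_self)
  obtain C chi where C: "C \<subseteq> quotient_set H" "card C = nat \<lceil>\<epsilon> * card (quotient_set H)\<rceil>"
      and cover: "\<epsilon> * CARD(bit ^ 'n) \<le> card (\<Union>C)"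
      and chi: "\<forall>c\<in>C. nontrivial_character H (chi c)
                  \<and> (\<forall>g\<in>c. \<epsilon> * card H < cmod (fourier_coeff A H g (chi c)))"
    using obtain_irregular_cosets[OF assms(3) two eps assms(4)] .
  define H' where "H' = {x \<in> H. \<forall>c\<in>C. chi c x = 1}"
  have chars: "\<forall>c\<in>C. is_character H (chi c)"
    using chi by (simp add: nontrivial_character_def)
  have H': "is_subgroup H'" "H' \<subseteq> H"
    using is_subgroup_common_kernel[OF assms(3) chars] by (auto simp: H'_def)
  obtain m where m: "card (quotient_set H) = 2 ^ m"
    using card_quotient_set_vec_bit[OF assms(3)] .
  have "card (quotient_set H') \<le> 2 ^ card C * card (quotient_set H)"
    unfolding H'_def using card_quotient_common_kernel[OF assms(3) two _ chars] by simp
  also have "\<dots> \<le> 2 ^ card (quotient_set H)"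
    using two_power_ceiling_le[of \<epsilon> m] assms(2) C(2) m by (simp add: mult.commute)
  finally have index: "card (quotient_set H') \<le> 2 ^ card (quotient_set H)" .
  have "ind A H + \<epsilon> ^ 3 \<le> ind A H'"
    using chi by (intro ind_gain_from_characters[where chi = chi, OF assms(3) two H' eps cover])
      (auto simp: H'_def)
  with H' index show ?thesis
    by blast
qed

end
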